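(* The set $\{[A]\in\mathrm{MALG}: \text{there is no } D\in\boldsymbol{\Delta}^0_2 \text{ with } \mu(A\,\triangle\, D)=0\}$ is comeager in $\mathrm{MALG}$.
   Context: $2^\omega$ is the Cantor space; $\mu$ is the coin-tossing measure ($\mu(N_s)=2^{-\mathrm{lh}(s)}$, $N_s=\{x:s\subset x\}$). $\mathrm{MALG}$ is the measure algebra: the set of equivalence classes $[A]$ of $\mu$-measurable subsets of $2^\omega$ under $A\equiv B\iff\mu(A\triangle B)=0$, endowed with the complete separable metric $\delta([A],[B])=\mu(A\triangle B)$, which makes it a Polish space. $\boldsymbol{\Delta}^0_2$ is the class of sets that are simultaneously $F_\sigma$ and $G_\delta$. *)

theory Defs
  imports "HOL-Analysis.Analysis" "HOL-Probability.Probability"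
begin

text \<open>Cantor space is modelled as the type nat => bool with the product topology
(library instance), whose topology is the term euclidean.\<close>

definition coin :: "(nat \<Rightarrow> bool) measure" where
  "coin = PiM UNIV (\<lambda>_. measure_pmf (bernoulli_pmf (1/2)))"

definition mu :: "(nat \<Rightarrow> bool) measure" where
  "mu = completion coin"

definition symdiff :: "'a set \<Rightarrow> 'a set \<Rightarrow> 'a set" where
  "symdiff A B = (A - B) \<union> (B - A)"

definition malg_class :: "(nat \<Rightarrow> bool) set \<Rightarrow> (nat \<Rightarrow> bool) set set" where
  "malg_class A = {B \<in> sets mu. measure mu (symdiff A B) = 0}"

definition MALG :: "(nat \<Rightarrow> bool) set set set" where
  "MALG = malg_class ` sets mu"

definition malg_dist :: "(nat \<Rightarrow> bool) set set \<Rightarrow> (nat \<Rightarrow> bool) set set \<Rightarrow> real" where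
  "malg_dist X Y = measure mu (symdiff (SOME A. A \<in> X) (SOME B. B \<in> Y))"

definition malg_topology :: "(nat \<Rightarrow> bool) set set topology" where
  "malg_topology = Metric_space.mtopology MALG malg_dist"

definition nowhere_dense_in :: "'a topology \<Rightarrow> 'a set \<Rightarrow> bool" where
  "nowhere_dense_in X N \<longleftrightarrow> N \<subseteq> topspace X \<and> X interior_of (X closure_of N) = {}"

definition meager_in :: "'a topology \<Rightarrow> 'a set \<Rightarrow> bool" where
  "meager_in X S \<longleftrightarrow> (\<exists>N :: nat \<Rightarrow> 'a set. (\<forall>n. nowhere_dense_in X (N n)) \<and> S \<subseteq> (\<Union>n. N n))"

definition comeager_in :: "'a topology \<Rightarrow> 'a set \<Rightarrow> bool" where
  "comeager_in X S \<longleftrightarrow> S \<subseteq> topspace X \<and> meager_in X (topspace X - S)"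

definition Delta02 :: "(nat \<Rightarrow> bool) set \<Rightarrow> bool" where
  "Delta02 D \<longleftrightarrow> fsigma_in euclidean D \<and> gdelta_in euclidean D"

end

theory Submission
  imports Defs
begin

(* For every finite binary string s let  splitting s  be the set of
   classes [A] with  0 < mu(A \<inter> N_s) < mu(N_s),  i.e. A cuts the basic cylinder N_s
   into two parts of positive measure.
   (1) The map [A] \<mapsto> mu(A \<inter> N_s) is 1-Lipschitz for the metric delta, so each
       splitting s is open; adding or removing a tiny subcylinder of N_s shows that
       it is dense.  Hence MALG - splitting s is nowhere dense.
   (2) If D is Delta^0_2, then D and its complement are both F_sigma, so Cantor space
       is covered by countably many closed sets each lying inside D or inside its
       complement.  By the Baire category theorem (Cantor space is compact Hausdorff)
       one of them contains a cylinder N_s; then mu(D \<inter> N_s) is 0 or mu(N_s), so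
       [D] \<notin> splitting s.
   Since there are countably many strings s, the classes with a Delta^0_2
   representative lie in a countable union of nowhere dense sets. *)

section \<open>Cylinders in Cantor space\<close>

definition cylinder :: "bool list \<Rightarrow> (nat \<Rightarrow> bool) set" where
  "cylinder s = {x. \<forall>i<length s. x i = s ! i}"

lemma cylinder_append_subset: "cylinder (s @ t) \<subseteq> cylinder s"
  unfolding cylinder_def by (auto simp: nth_append)

lemma cylinder_prefix: "cylinder (map x [0..<n]) = {y. \<forall>i<n. y i = x i}"
  unfolding cylinder_def by auto

lemma open_contains_cylinder:
  fixes U :: "(nat \<Rightarrow> bool) set"
  assumes "open U" "x \<in> U"
  shows "\<exists>s. x \<in> cylinder s \<and> cylinder s \<subseteq> U"
proof -
  have "openin (product_topology (\<lambda>_. euclidean) UNIV) U"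
    using assms(1) by (simp add: euclidean_product_topology)
  from product_topology_open_contains_basis[OF this assms(2)]
  obtain X where X: "x \<in> PiE UNIV X" "finite {i. X i \<noteq> UNIV}" "PiE UNIV X \<subseteq> U"
    by auto
  obtain n where n: "\<And>i. X i \<noteq> UNIV \<Longrightarrow> i < n"
    using finite_nat_bounded[OF X(2)] by auto
  have "cylinder (map x [0..<n]) \<subseteq> PiE UNIV X"
  proof
    fix y assume "y \<in> cylinder (map x [0..<n])"
    then have "\<forall>i<n. y i = x i" by (simp add: cylinder_prefix)
    then have "y i \<in> X i" for i
      using X(1) n[of i] by (cases "i < n") (auto simp: PiE_iff)
    then show "y \<in> PiE UNIV X" by (simp add: PiE_iff)
  qed
  then show ?thesis
    using X(3) by (intro exI[of _ "map x [0..<n]"]) (auto simp: cylinder_prefix)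
qed

lemma Hausdorff_space_bool: "Hausdorff_space (euclidean :: bool topology)"
  unfolding Hausdorff_space_def
proof (intro allI impI)
  fix x y :: bool assume "x \<in> topspace euclidean \<and> y \<in> topspace euclidean \<and> x \<noteq> y"
  then show "\<exists>U V. openin euclidean U \<and> openin euclidean V \<and> x \<in> U \<and> y \<in> V \<and> disjnt U V"
    by (intro exI[of _ "{x}"] exI[of _ "{y}"])
      (auto simp: discrete_topology_class.open_discrete disjnt_def)
qed

text \<open>Cantor space is compact Hausdorff, hence a Baire space.\<close>
lemma cantor_compact_Hausdorff:
  "compact_space (euclidean :: (nat \<Rightarrow> bool) topology)"
  "Hausdorff_space (euclidean :: (nat \<Rightarrow> bool) topology)"
proof -
  have "compact_space (euclidean :: bool topology)"
    by (simp add: compact_space_def finite_imp_compact)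
  then have "compact_space (product_topology (\<lambda>_::nat. euclidean :: bool topology) UNIV)"
    by (simp add: compact_space_product_topology)
  then show "compact_space (euclidean :: (nat \<Rightarrow> bool) topology)"
    by (simp add: euclidean_product_topology)
  have "Hausdorff_space (product_topology (\<lambda>_::nat. euclidean :: bool topology) UNIV)"
    unfolding Hausdorff_space_product_topology by (simp add: Hausdorff_space_bool)
  then show "Hausdorff_space (euclidean :: (nat \<Rightarrow> bool) topology)"
    by (simp add: euclidean_product_topology)
qed

section \<open>The Baire category argument\<close>

lemma Baire_closed_cover:
  assumes "completely_metrizable_space X \<or> locally_compact_space X \<and> regular_space X"
    and "countable \<G>" "\<And>C. C \<in> \<G> \<Longrightarrow> closedin X C"
    and "\<Union>\<G> = topspace X" "topspace X \<noteq> {}"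
  shows "\<exists>C\<in>\<G>. X interior_of C \<noteq> {}"
proof (rule ccontr)
  assume "\<not> ?thesis"
  then have "\<And>C. C \<in> \<G> \<Longrightarrow> closedin X C \<and> X interior_of C = {}"
    using assms(3) by blast
  then have "X interior_of \<Union>\<G> = {}"
    by (rule Baire_category_alt[OF assms(1,2)])
  then show False
    using assms(4,5) by (metis interior_of_topspace)
qed

lemma closed_cover_contains_cylinder:
  fixes \<G> :: "(nat \<Rightarrow> bool) set set"
  assumes "countable \<G>" "\<And>C. C \<in> \<G> \<Longrightarrow> closed C" "\<Union>\<G> = UNIV"
  shows "\<exists>C\<in>\<G>. \<exists>s. cylinder s \<subseteq> C"
proof -
  have Baire: "completely_metrizable_space (euclidean :: (nat \<Rightarrow> bool) topology)
      \<or> locally_compact_space (euclidean :: (nat \<Rightarrow> bool) topology)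
        \<and> regular_space (euclidean :: (nat \<Rightarrow> bool) topology)"
    using cantor_compact_Hausdorff compact_imp_locally_compact_space
      compact_Hausdorff_imp_regular_space by blast
  have "\<exists>C\<in>\<G>. euclidean interior_of C \<noteq> {}"
    by (rule Baire_closed_cover[OF Baire assms(1)]) (use assms(2,3) in auto)
  then obtain C x where C: "C \<in> \<G>" "x \<in> interior C"
    by auto
  then obtain s where "cylinder s \<subseteq> interior C"
    using open_contains_cylinder[of "interior C" x] by auto
  then show ?thesis
    using C(1) interior_subset by blast
qed

lemma Delta02_closed_cover:
  assumes "Delta02 D"
  obtains \<G> where "countable \<G>" "\<And>C. C \<in> \<G> \<Longrightarrow> closed C"
    "\<And>C. C \<in> \<G> \<Longrightarrow> C \<subseteq> D \<or> C \<inter> D = {}" "\<Union>\<G> = UNIV"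
proof -
  have "fsigma_in euclidean D" "fsigma_in euclidean (- D)"
    using assms unfolding Delta02_def by (auto simp: gdelta_in_fsigma_in Compl_eq_Diff_UNIV)
  then obtain \<G>\<^sub>1 \<G>\<^sub>2 where
    G1: "countable \<G>\<^sub>1" "\<G>\<^sub>1 \<subseteq> Collect closed" "\<Union>\<G>\<^sub>1 = D" and
    G2: "countable \<G>\<^sub>2" "\<G>\<^sub>2 \<subseteq> Collect closed" "\<Union>\<G>\<^sub>2 = - D"
    unfolding fsigma_in_def union_of_def closed_closedin[symmetric] by blast
  show ?thesis
  proof (rule that[of "\<G>\<^sub>1 \<union> \<G>\<^sub>2"])
    show "countable (\<G>\<^sub>1 \<union> \<G>\<^sub>2)" "\<Union>(\<G>\<^sub>1 \<union> \<G>\<^sub>2) = UNIV"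
      using G1 G2 by auto
    fix C assume "C \<in> \<G>\<^sub>1 \<union> \<G>\<^sub>2"
    then show "closed C" "C \<subseteq> D \<or> C \<inter> D = {}"
      using G1 G2 by blast+
  qed
qed

lemma Delta02_decides_cylinder:
  assumes "Delta02 D"
  shows "\<exists>s. cylinder s \<subseteq> D \<or> cylinder s \<inter> D = {}"
proof -
  obtain \<G> where G: "countable \<G>" "\<And>C. C \<in> \<G> \<Longrightarrow> closed C"
    "\<And>C. C \<in> \<G> \<Longrightarrow> C \<subseteq> D \<or> C \<inter> D = {}" "\<Union>\<G> = UNIV"
    using Delta02_closed_cover[OF assms] by blast
  then obtain C s where "C \<in> \<G>" "cylinder s \<subseteq> C"
    using closed_cover_contains_cylinder[OF G(1,2,4)] by blast
  then show ?thesis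
    using G(3) by blast
qed

section \<open>The coin-tossing measure on cylinders\<close>

lemma space_coin [simp]: "space coin = UNIV"
  unfolding coin_def by (simp add: space_PiM)

lemma cylinder_prod_emb:
  "cylinder s = prod_emb UNIV (\<lambda>_. measure_pmf (bernoulli_pmf (1/2))) {..<length s}
                  (PiE {..<length s} (\<lambda>i. {s ! i}))"
  unfolding cylinder_def by (rule set_eqI) (auto simp: prod_emb_iff restrict_PiE_iff Pi_iff)

lemma cylinder_in_sets_coin: "cylinder s \<in> sets coin"
  unfolding cylinder_prod_emb coin_def by (intro sets_PiM_I) auto

lemma emeasure_coin_cylinder: "emeasure coin (cylinder s) = ennreal ((1/2) ^ length s)"
proof -
  have "emeasure coin (cylinder s)
      = (\<Prod>i\<in>{..<length s}. emeasure (measure_pmf (bernoulli_pmf (1/2))) {s ! i})"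
    unfolding cylinder_prod_emb coin_def by (intro emeasure_PiM_emb prob_space_measure_pmf) auto
  also have "\<dots> = (\<Prod>i\<in>{..<length s}. ennreal (1/2))"
    by (intro prod.cong refl) (simp add: emeasure_pmf_single)
  also have "\<dots> = ennreal ((1/2) ^ length s)"
    by (simp only: prod_constant card_lessThan) (rule ennreal_power, simp)
  finally show ?thesis .
qed

text \<open>Every open set is a countable union of cylinders, so Borel sets are measurable.\<close>
lemma open_in_sets_coin:
  fixes U :: "(nat \<Rightarrow> bool) set"
  assumes "open U"
  shows "U \<in> sets coin"
proof -
  have "U = \<Union> (cylinder ` {s. cylinder s \<subseteq> U})"
    using open_contains_cylinder[OF assms] by blast
  also have "\<dots> \<in> sets coin"
    by (intro sets.countable_Union countable_image) (auto simp: cylinder_in_sets_coin)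
  finally show ?thesis .
qed

lemma closed_in_sets_coin:
  fixes C :: "(nat \<Rightarrow> bool) set"
  assumes "closed C"
  shows "C \<in> sets coin"
proof -
  have "- C \<in> sets coin"
    using assms by (intro open_in_sets_coin) (rule open_Compl)
  from sets.compl_sets[OF this] show ?thesis by simp
qed

interpretation mu: prob_space mu
  unfolding mu_def coin_def
  by (intro prob_space.prob_space_completion prob_space_PiM prob_space_measure_pmf)

lemma cylinder_in_sets_mu: "cylinder s \<in> sets mu"
  unfolding mu_def using cylinder_in_sets_coin by (rule sets_completionI_sets)

lemma measure_mu_cylinder: "measure mu (cylinder s) = (1/2) ^ length s"
  unfolding mu_def measure_def
  by (simp add: emeasure_coin_cylinder cylinder_in_sets_coin)

lemma Delta02_in_sets_mu:
  assumes "Delta02 D"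
  shows "D \<in> sets mu"
proof -
  obtain \<G> where "countable \<G>" "\<G> \<subseteq> Collect closed" "\<Union>\<G> = D"
    using assms unfolding Delta02_def fsigma_in_def union_of_def closed_closedin[symmetric]
    by blast
  then have "D \<in> sets coin"
    using closed_in_sets_coin by auto
  then show ?thesis
    unfolding mu_def by simp
qed

lemma small_subcylinder:
  assumes "0 < e"
  obtains t where "cylinder t \<subseteq> cylinder s" "0 < measure mu (cylinder t)"
    "measure mu (cylinder t) < measure mu (cylinder s)" "measure mu (cylinder t) < e"
proof -
  obtain k where k: "(1/2::real) ^ k < e"
    using real_arch_pow_inv[OF assms, of "1/2"] by auto
  define t where "t = s @ replicate (Suc k) True"
  have "measure mu (cylinder t) = (1/2) ^ (length s + Suc k)"
    unfolding t_def measure_mu_cylinder by simp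
  moreover have "(1/2::real) ^ (length s + Suc k) < (1/2) ^ length s"
    by (rule power_strict_decreasing) auto
  moreover have "(1/2::real) ^ (length s + Suc k) \<le> (1/2) ^ k"
    by (rule power_decreasing) auto
  ultimately show ?thesis
    using k by (intro that[of t]) (auto simp: t_def cylinder_append_subset measure_mu_cylinder)
qed

lemma symdiff_commute: "symdiff A B = symdiff B A"
  unfolding symdiff_def by auto

lemma symdiff_self [simp]: "symdiff A A = {}"
  unfolding symdiff_def by auto

lemma (in finite_measure) finite_measure_Un_le:
  "A \<in> sets M \<Longrightarrow> B \<in> sets M \<Longrightarrow> measure M (A \<union> B) \<le> measure M A + measure M B"
  by (rule measure_subadditive) (auto simp: emeasure_eq_measure)

lemma (in finite_measure) symdiff_in_sets:
  "A \<in> sets M \<Longrightarrow> B \<in> sets M \<Longrightarrow> symdiff A B \<in> sets M"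
  unfolding symdiff_def by auto

lemma (in finite_measure) measure_symdiff_triangle:
  assumes "A \<in> sets M" "B \<in> sets M" "C \<in> sets M"
  shows "measure M (symdiff A C) \<le> measure M (symdiff A B) + measure M (symdiff B C)"
proof -
  have "measure M (symdiff A C) \<le> measure M (symdiff A B \<union> symdiff B C)"
    using assms by (intro finite_measure_mono) (auto simp: symdiff_def)
  also have "\<dots> \<le> measure M (symdiff A B) + measure M (symdiff B C)"
    using assms by (intro finite_measure_Un_le symdiff_in_sets)
  finally show ?thesis .
qed

lemma (in finite_measure) measure_Int_symdiff_le:
  assumes "A \<in> sets M" "B \<in> sets M" "N \<in> sets M"
  shows "measure M (A \<inter> N) \<le> measure M (B \<inter> N) + measure M (symdiff A B)"
proof -
  have "measure M (A \<inter> N) \<le> measure M ((B \<inter> N) \<union> symdiff A B)"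
    using assms by (intro finite_measure_mono) (auto simp: symdiff_def)
  also have "\<dots> \<le> measure M (B \<inter> N) + measure M (symdiff A B)"
    using assms by (intro finite_measure_Un_le symdiff_in_sets) auto
  finally show ?thesis .
qed

lemma (in finite_measure) measure_Int_lipschitz:
  assumes "A \<in> sets M" "B \<in> sets M" "N \<in> sets M"
  shows "\<bar>measure M (A \<inter> N) - measure M (B \<inter> N)\<bar> \<le> measure M (symdiff A B)"
  using measure_Int_symdiff_le[OF assms] measure_Int_symdiff_le[OF assms(2,1,3)]
  by (simp add: symdiff_commute abs_le_iff)

section \<open>The measure algebra as a metric space\<close>

lemma malg_class_eq_iff:
  assumes "A \<in> sets mu" "B \<in> sets mu"
  shows "malg_class A = malg_class B \<longleftrightarrow> measure mu (symdiff A B) = 0"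
proof
  assume "malg_class A = malg_class B"
  then have "B \<in> malg_class A"
    using assms(2) by (simp add: malg_class_def)
  then show "measure mu (symdiff A B) = 0"
    by (simp add: malg_class_def)
next
  assume null: "measure mu (symdiff A B) = 0"
  have "measure mu (symdiff A C) = measure mu (symdiff B C)" if "C \<in> sets mu" for C
    using mu.measure_symdiff_triangle[OF assms(1,2) that]
      mu.measure_symdiff_triangle[OF assms(2,1) that] null
    by (simp add: symdiff_commute)
  then show "malg_class A = malg_class B"
    unfolding malg_class_def by auto
qed

lemma malg_member:
  assumes "c \<in> MALG" "A \<in> c"
  shows "A \<in> sets mu" "c = malg_class A"
proof -
  obtain A\<^sub>0 where A\<^sub>0: "A\<^sub>0 \<in> sets mu" "c = malg_class A\<^sub>0"
    using assms(1) unfolding MALG_def by auto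
  then show A: "A \<in> sets mu"
    using assms(2) by (simp add: malg_class_def)
  have "measure mu (symdiff A\<^sub>0 A) = 0"
    using assms(2) A\<^sub>0 by (simp add: malg_class_def)
  then show "c = malg_class A"
    using A\<^sub>0 A malg_class_eq_iff by simp
qed

lemma malg_class_in_MALG: "A \<in> sets mu \<Longrightarrow> malg_class A \<in> MALG"
  unfolding MALG_def by simp

lemma malg_class_self: "A \<in> sets mu \<Longrightarrow> A \<in> malg_class A"
  unfolding malg_class_def by simp

definition malg_rep :: "(nat \<Rightarrow> bool) set set \<Rightarrow> (nat \<Rightarrow> bool) set" where
  "malg_rep c = (SOME A. A \<in> c)"

lemma malg_rep_in: "c \<in> MALG \<Longrightarrow> malg_rep c \<in> c"
  unfolding MALG_def malg_rep_def by (auto intro: someI malg_class_self)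

lemma malg_rep_in_sets: "c \<in> MALG \<Longrightarrow> malg_rep c \<in> sets mu"
  using malg_member(1) malg_rep_in by blast

lemma malg_rep_class: "A \<in> sets mu \<Longrightarrow> measure mu (symdiff A (malg_rep (malg_class A))) = 0"
  using malg_rep_in[OF malg_class_in_MALG] by (simp add: malg_class_def)

lemma malg_dist_rep: "malg_dist c c' = measure mu (symdiff (malg_rep c) (malg_rep c'))"
  unfolding malg_dist_def malg_rep_def ..

text \<open>delta is a metric on MALG: the classes are exactly the fibres of the pseudometric.\<close>
lemma Metric_space_MALG: "Metric_space MALG malg_dist"
proof
  fix x y z
  show "0 \<le> malg_dist x y"
    by (simp add: malg_dist_rep)
  show "malg_dist x y = malg_dist y x"
    by (simp add: malg_dist_rep symdiff_commute)
  assume x: "x \<in> MALG" and y: "y \<in> MALG"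
  have "x = malg_class (malg_rep x)" "y = malg_class (malg_rep y)"
    using malg_member(2) malg_rep_in x y by blast+
  then have "x = y \<longleftrightarrow> malg_class (malg_rep x) = malg_class (malg_rep y)"
    by metis
  then show "malg_dist x y = 0 \<longleftrightarrow> x = y"
    using malg_class_eq_iff[OF malg_rep_in_sets[OF x] malg_rep_in_sets[OF y]]
    by (simp add: malg_dist_rep)
  assume z: "z \<in> MALG"
  show "malg_dist x z \<le> malg_dist x y + malg_dist y z"
    unfolding malg_dist_rep using x y z
    by (intro mu.measure_symdiff_triangle malg_rep_in_sets)
qed

interpretation malg: Metric_space MALG malg_dist
  by (rule Metric_space_MALG)

lemma topspace_malg_topology: "topspace malg_topology = MALG"
  unfolding malg_topology_def by simp

lemma nowhere_dense_complement:
  assumes "openin X U" "X closure_of U = topspace X"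
  shows "nowhere_dense_in X (topspace X - U)"
proof -
  have "X closure_of (topspace X - U) = topspace X - U"
    using assms(1) by (simp add: closure_of_closedin closedin_diff)
  moreover have "X interior_of (topspace X - U) = {}"
    using assms(2) by (simp add: interior_of_complement)
  ultimately show ?thesis
    unfolding nowhere_dense_in_def by simp
qed

section \<open>Classes splitting a cylinder\<close>

definition cylinder_mass :: "bool list \<Rightarrow> (nat \<Rightarrow> bool) set set \<Rightarrow> real" where
  "cylinder_mass s c = measure mu (malg_rep c \<inter> cylinder s)"

definition splitting :: "bool list \<Rightarrow> (nat \<Rightarrow> bool) set set set" where
  "splitting s = {c \<in> MALG. 0 < cylinder_mass s c \<and> cylinder_mass s c < measure mu (cylinder s)}"

lemma cylinder_mass_member:
  assumes "c \<in> MALG" "A \<in> c"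
  shows "cylinder_mass s c = measure mu (A \<inter> cylinder s)"
proof -
  have A: "A \<in> sets mu" "c = malg_class A"
    using malg_member[OF assms] by blast+
  then have "measure mu (symdiff A (malg_rep c)) = 0"
    using malg_rep_class by simp
  then show ?thesis
    using mu.measure_Int_lipschitz[OF A(1) malg_rep_in_sets[OF assms(1)] cylinder_in_sets_mu]
    unfolding cylinder_mass_def by simp
qed

lemma cylinder_mass_lipschitz:
  assumes "c \<in> MALG" "c' \<in> MALG"
  shows "\<bar>cylinder_mass s c - cylinder_mass s c'\<bar> \<le> malg_dist c c'"
  unfolding cylinder_mass_def malg_dist_rep
  by (intro mu.measure_Int_lipschitz malg_rep_in_sets assms cylinder_in_sets_mu)

lemma splitting_open: "openin malg_topology (splitting s)"
  unfolding malg_topology_def malg.openin_mtopology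
proof (intro conjI allI impI)
  show "splitting s \<subseteq> MALG"
    unfolding splitting_def by blast
  fix c assume "c \<in> splitting s"
  then have c: "c \<in> MALG" "0 < cylinder_mass s c" "cylinder_mass s c < measure mu (cylinder s)"
    unfolding splitting_def by blast+
  define r where "r = min (cylinder_mass s c) (measure mu (cylinder s) - cylinder_mass s c)"
  have "malg.mball c r \<subseteq> splitting s"
  proof
    fix c' assume "c' \<in> malg.mball c r"
    then have c': "c' \<in> MALG" "malg_dist c c' < r"
      by auto
    then show "c' \<in> splitting s"
      using cylinder_mass_lipschitz[OF c(1) c'(1), of s] c
      unfolding splitting_def r_def by auto
  qed
  moreover have "0 < r"
    using c unfolding r_def by simp
  ultimately show "\<exists>r>0. malg.mball c r \<subseteq> splitting s"
    by blast
qed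

text \<open>Any measurable set can be moved by less than e so that it splits N_s: add or remove
  a small subcylinder of N_s.\<close>
lemma splitting_perturbation:
  assumes A: "A \<in> sets mu" and "0 < e"
  obtains A' where "A' \<in> sets mu" "measure mu (symdiff A A') < e"
    "0 < measure mu (A' \<inter> cylinder s)" "measure mu (A' \<inter> cylinder s) < measure mu (cylinder s)"
proof (cases "0 < measure mu (A \<inter> cylinder s) \<and> measure mu (A \<inter> cylinder s) < measure mu (cylinder s)")
  case True
  then show ?thesis
    using assms by (intro that[of A]) auto
next
  case False
  note events [intro!] = A sets.Un sets.Int sets.Diff cylinder_in_sets_mu
  obtain t where t: "cylinder t \<subseteq> cylinder s" "0 < measure mu (cylinder t)"
    "measure mu (cylinder t) < measure mu (cylinder s)" "measure mu (cylinder t) < e"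
    using small_subcylinder[OF \<open>0 < e\<close>] by blast
  have close: "measure mu (symdiff A A') < e" if "symdiff A A' \<subseteq> cylinder t" for A'
    using mu.finite_measure_mono[OF that cylinder_in_sets_mu] t(4) by simp
  have "measure mu (A \<inter> cylinder s) \<le> measure mu (cylinder s)"
    by (intro mu.finite_measure_mono) auto
  then consider "measure mu (A \<inter> cylinder s) = 0"
    | "measure mu (A \<inter> cylinder s) = measure mu (cylinder s)"
    using False measure_nonneg[of mu "A \<inter> cylinder s"] by linarith
  then show ?thesis
  proof cases
    case 1
    have eq: "(A \<union> cylinder t) \<inter> cylinder s = (A \<inter> cylinder s) \<union> cylinder t"
      using t(1) by blast
    have "measure mu (cylinder t) \<le> measure mu ((A \<union> cylinder t) \<inter> cylinder s)"
      unfolding eq by (intro mu.finite_measure_mono) auto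
    moreover have "measure mu ((A \<union> cylinder t) \<inter> cylinder s) \<le> 0 + measure mu (cylinder t)"
      unfolding eq 1[symmetric] by (intro mu.finite_measure_Un_le) auto
    ultimately show ?thesis
      using t by (intro that[of "A \<union> cylinder t"] close) (auto simp: symdiff_def)
  next
    case 2
    have "measure mu (A \<inter> cylinder s) \<le> measure mu (((A - cylinder t) \<inter> cylinder s) \<union> cylinder t)"
      by (intro mu.finite_measure_mono) auto
    also have "\<dots> \<le> measure mu ((A - cylinder t) \<inter> cylinder s) + measure mu (cylinder t)"
      by (intro mu.finite_measure_Un_le) auto
    finally have "measure mu (A \<inter> cylinder s)
        \<le> measure mu ((A - cylinder t) \<inter> cylinder s) + measure mu (cylinder t)" .
    moreover have "measure mu ((A - cylinder t) \<inter> cylinder s) \<le> measure mu (cylinder s - cylinder t)"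
      by (intro mu.finite_measure_mono) auto
    moreover have "measure mu (cylinder s - cylinder t) = measure mu (cylinder s) - measure mu (cylinder t)"
      using t(1) by (intro mu.finite_measure_Diff) auto
    ultimately show ?thesis
      using t 2 by (intro that[of "A - cylinder t"] close) (auto simp: symdiff_def)
  qed
qed

lemma splitting_dense: "malg_topology closure_of splitting s = MALG"
proof -
  have "c \<in> malg_topology closure_of splitting s" if c: "c \<in> MALG" for c
  proof -
    have "\<exists>c'\<in>splitting s. c' \<in> malg.mball c r" if "0 < r" for r
    proof -
      obtain A' where A': "A' \<in> sets mu" "measure mu (symdiff (malg_rep c) A') < r"
        "0 < measure mu (A' \<inter> cylinder s)" "measure mu (A' \<inter> cylinder s) < measure mu (cylinder s)"
        using splitting_perturbation[OF malg_rep_in_sets[OF c] \<open>0 < r\<close>] by blast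
      define c' where "c' = malg_class A'"
      have c': "c' \<in> MALG" "A' \<in> c'"
        unfolding c'_def using A'(1) by (simp_all add: malg_class_in_MALG malg_class_self)
      have "malg_dist c c' \<le> measure mu (symdiff (malg_rep c) A') + measure mu (symdiff A' (malg_rep c'))"
        unfolding malg_dist_rep
        by (intro mu.measure_symdiff_triangle malg_rep_in_sets c c' A'(1))
      then have "malg_dist c c' < r"
        using A'(2) malg_rep_class[OF A'(1)] unfolding c'_def by simp
      moreover have "c' \<in> splitting s"
        using A' c' cylinder_mass_member[OF c'] unfolding splitting_def by simp
      ultimately show ?thesis
        using c c' by auto
    qed
    then show ?thesis
      unfolding malg_topology_def malg.metric_closure_of using c by blast
  qed
  then show ?thesis
    using closure_of_subset_topspace[of malg_topology "splitting s"]
    by (auto simp: topspace_malg_topology)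
qed

lemma nowhere_dense_non_splitting: "nowhere_dense_in malg_topology (MALG - splitting s)"
  using nowhere_dense_complement[OF splitting_open, of s]
  by (simp add: splitting_dense topspace_malg_topology)

lemma Delta02_class_not_splitting:
  assumes c: "c \<in> MALG" "A \<in> c" and D: "Delta02 D" "measure mu (symdiff A D) = 0"
  shows "\<exists>s. c \<notin> splitting s"
proof -
  have "D \<in> sets mu"
    using D(1) by (rule Delta02_in_sets_mu)
  then have "D \<in> c"
    using malg_member[OF c] D(2) by (simp add: malg_class_def)
  obtain s where "cylinder s \<subseteq> D \<or> cylinder s \<inter> D = {}"
    using Delta02_decides_cylinder[OF D(1)] by blast
  then have "D \<inter> cylinder s = cylinder s \<or> D \<inter> cylinder s = {}"
    by blast
  then have "c \<notin> splitting s"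
    using cylinder_mass_member[OF c(1) \<open>D \<in> c\<close>, of s] unfolding splitting_def by auto
  then show ?thesis
    by blast
qed

theorem theorem1p6:
  shows "comeager_in malg_topology
           {c \<in> MALG. \<not> (\<exists>A \<in> c. \<exists>D. Delta02 D \<and> measure mu (symdiff A D) = 0)}"
proof -
  define N where "N n = MALG - splitting (from_nat n)" for n
  have "nowhere_dense_in malg_topology (N n)" for n
    unfolding N_def by (rule nowhere_dense_non_splitting)
  moreover have "MALG - {c \<in> MALG. \<not> (\<exists>A \<in> c. \<exists>D. Delta02 D \<and> measure mu (symdiff A D) = 0)}
      \<subseteq> (\<Union>n. N n)"
  proof
    fix c assume "c \<in> MALG - {c \<in> MALG. \<not> (\<exists>A \<in> c. \<exists>D. Delta02 D \<and> measure mu (symdiff A D) = 0)}"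
    then obtain s where "c \<in> MALG" "c \<notin> splitting s"
      using Delta02_class_not_splitting by blast
    then have "c \<in> N (to_nat s)"
      unfolding N_def by simp
    then show "c \<in> (\<Union>n. N n)"
      by blast
  qed
  ultimately show ?thesis
    unfolding comeager_in_def meager_in_def topspace_malg_topology by blast
qed

end
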